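(* Let $\mu\leq\nu$ and $\lambda$ be infinite cardinals with $2^{\nu^{<\mu}}\leq\lambda$. If $X_1$ is a $[\mu,\nu]$-compact topological space and $X_2$ is an initially $\lambda$-compact topological space, then $X_1\times X_2$ is $[\mu,\nu]$-compact. If moreover every cardinal in the interval $[\mu,\nu]$ is regular, the same conclusion holds under the weaker assumption $2^{\nu}\leq\lambda$ in place of $2^{\nu^{<\mu}}\leq\lambda$.
   Context: No separation axioms are assumed; all topological spaces are nonempty. For infinite cardinals $\mu\leq\nu$, a space is $[\mu,\nu]$-compact if every open cover of cardinality at most $\nu$ has a subcover of cardinality $<\mu$. A space is initially $\lambda$-compact if it is $[\omega,\lambda]$-compact. *)

theory Defs
  imports "HOL-Analysis.Analysis"
begin

unbundle cardinal_syntax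

text \<open>Cardinals are represented by sets: the set M stands for the cardinal card_of M.\<close>

definition mn_compact :: "'a topology \<Rightarrow> 'm set \<Rightarrow> 'n set \<Rightarrow> bool" where
  "mn_compact X M N \<longleftrightarrow>
     (\<forall>\<U>. (\<forall>U\<in>\<U>. openin X U) \<and> topspace X \<subseteq> \<Union>\<U> \<and> (card_of (\<U>)) \<le>o (card_of (N)) \<longrightarrow>
        (\<exists>\<V>\<subseteq>\<U>. topspace X \<subseteq> \<Union>\<V> \<and> (card_of (\<V>)) <o (card_of (M))))"

definition initially_compact :: "'a topology \<Rightarrow> 'l set \<Rightarrow> bool" where
  "initially_compact X L \<longleftrightarrow> mn_compact X (UNIV :: nat set) L"

text \<open>A set of cardinality nu^(<mu) (for mu \<le> nu infinite): partial functions from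
  M to N whose domain has cardinality less than card_of M.\<close>
definition lt_exp_set :: "'n set \<Rightarrow> 'm set \<Rightarrow> ('m \<rightharpoonup> 'n) set" where
  "lt_exp_set N M = {f. dom f \<subseteq> M \<and> ran f \<subseteq> N \<and> (card_of (dom f)) <o (card_of (M))}"

end

theory Submission
  imports Defs
begin

text \<open>Suppose a cover \<open>\<U>\<close> of \<open>X1 \<times> X2\<close> with \<open>|\<U>| \<le> \<nu>\<close> has no subcover of size
  \<open>< \<mu>\<close>. Pick an index set \<open>I\<close>, sets \<open>C i \<subseteq> \<U>\<close> and points \<open>p i\<close> not covered by \<open>C i\<close>, such
  that fewer than \<open>\<mu>\<close> finite subsets of \<open>\<U>\<close> always lie in a common \<open>C i\<close>. Then the at most
  \<open>\<nu>\<close> closed sets \<open>cl {fst (p i) | T \<subseteq> C i}\<close>, \<open>T\<close> finite, have the \<open><\<mu>\<close>-intersection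
  property, so \<open>[\<mu>,\<nu>]\<close>-compactness of \<open>X1\<close> gives a common point \<open>x\<close>. The at most
  \<open>2^|I|\<close> closed sets \<open>cl {snd (p i) | T \<subseteq> C i, fst (p i) \<in> U}\<close>, \<open>U\<close> a neighbourhood of
  \<open>x\<close>, have the finite intersection property, so initial \<open>\<lambda>\<close>-compactness of \<open>X2\<close> gives a
  common point \<open>y\<close>. A box around \<open>(x, y)\<close> inside some \<open>w \<in> \<U>\<close> then contains a point
  \<open>p i\<close> with \<open>w \<in> C i\<close>, a contradiction.

  In general \<open>I\<close> is the set of subfamilies of \<open>\<U>\<close> of size \<open>< \<mu>\<close>, so \<open>|I| \<le> \<nu>^<\<mu>\<close>. If
  all cardinals in \<open>[\<mu>,\<nu>]\<close> are regular, one takes instead for \<open>I\<close> a subcover of minimal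
  cardinality, well-ordered by its (regular) cardinal, and for \<open>C i\<close> the initial segments; then
  \<open>|I| \<le> \<nu>\<close>.\<close>

lemma finite_card_of_ordLess_infinite: "finite A \<Longrightarrow> infinite B \<Longrightarrow> |A| <o |B|"
  using finite_ordLess_infinite card_of_Well_order by (metis Field_card_of)

lemma card_of_ordLess_nat_iff_finite: "|A| <o |UNIV :: nat set| \<longleftrightarrow> finite A"
  unfolding finite_iff_ordLess_natLeq
  using ordLess_ordIso_trans[OF _ card_of_nat] ordLess_ordIso_trans[OF _ ordIso_symmetric[OF card_of_nat]]
  by blast

lemma card_of_Pow_mono: "|A| \<le>o |B| \<Longrightarrow> |Pow A| \<le>o |Pow B|"
  unfolding card_of_ordLeq[symmetric] by (metis image_Pow_mono inj_on_image_Pow)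

lemma card_of_lists_infinite_ordLeq:
  assumes "infinite A"
  shows "|lists A| \<le>o |A|"
proof -
  define lists_of_length where "lists_of_length n = {xs \<in> lists A. length xs = n}" for n
  have "|lists_of_length n| \<le>o |A|" for n
  proof (induction n)
    case 0
    have "lists_of_length 0 = {[]}" by (auto simp: lists_of_length_def)
    then show ?case
      using finite_card_of_ordLess_infinite[OF _ assms] ordLess_imp_ordLeq by (metis finite.simps)
  next
    case (Suc n)
    have "lists_of_length (Suc n) = case_prod Cons ` (A \<times> lists_of_length n)"
      by (force simp: lists_of_length_def length_Suc_conv)
    then have "|lists_of_length (Suc n)| \<le>o |A \<times> lists_of_length n|"
      by (simp only: card_of_image)
    also have "|A \<times> lists_of_length n| \<le>o |A \<times> A|"
      using Suc card_of_Times_mono2 by blast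
    also have "|A \<times> A| =o |A|"
      using card_of_Times_same_infinite assms by blast
    finally show ?case using ordLeq_ordIso_trans by blast
  qed
  moreover have "lists A = (\<Union>n. lists_of_length n)" by (auto simp: lists_of_length_def)
  moreover have "|UNIV :: nat set| \<le>o |A|" using assms infinite_iff_card_of_nat by blast
  ultimately show ?thesis using card_of_UNION_ordLeq_infinite[OF assms] by metis
qed

lemma card_of_Fpow_ordLeq_infinite:
  assumes "|A| \<le>o |B|" and "infinite B"
  shows "|Fpow A| \<le>o |B|"
proof -
  obtain f where f: "inj_on f A" "f ` A \<subseteq> B"
    using assms(1) card_of_ordLeq[of A B] by auto
  have "|Fpow A| \<le>o |Fpow B|"
    using card_of_ordLeq[of "Fpow A" "Fpow B"] inj_on_image_Fpow[OF f(1)] image_Fpow_mono[OF f(2)]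
    by blast
  moreover have "Fpow B \<subseteq> set ` lists B"
  proof
    fix X assume "X \<in> Fpow B"
    then obtain xs where "set xs = X" "X \<subseteq> B" by (auto simp: Fpow_def dest: finite_list)
    then show "X \<in> set ` lists B" by (intro image_eqI[of _ _ xs]) auto
  qed
  then have "|Fpow B| \<le>o |lists B|"
    by (rule ordLeq_transitive[OF card_of_mono1 card_of_image])
  ultimately show ?thesis
    using card_of_lists_infinite_ordLeq[OF assms(2)] by (blast intro: ordLeq_transitive)
qed

lemma card_of_Union_finite_ordLess:
  assumes "infinite M" and "|\<T>| <o |M|" and "\<And>T. T \<in> \<T> \<Longrightarrow> finite T"
  shows "|\<Union>\<T>| <o |M|"
proof (cases "finite \<T>")
  case True
  then have "finite (\<Union>\<T>)" using assms(3) by blast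
  then show ?thesis by (rule finite_card_of_ordLess_infinite[OF _ assms(1)])
next
  case False
  have "\<forall>T\<in>\<T>. |id T| \<le>o |\<T>|"
    using assms(3) finite_card_of_ordLess_infinite[OF _ False] ordLess_imp_ordLeq by auto
  then have "|\<Union>T\<in>\<T>. id T| \<le>o |\<T>|"
    by (rule card_of_UNION_ordLeq_infinite[OF False ordIso_imp_ordLeq[OF card_of_refl]])
  then show ?thesis using assms(2) by (simp add: ordLeq_ordLess_trans)
qed

lemma card_of_under_ordLess_infinite:
  assumes "infinite V" and "a \<in> V"
  shows "|under (card_of V) a| <o |V|"
proof -
  have "|{a}| <o |V|"
    by (rule finite_card_of_ordLess_infinite[OF _ assms(1)]) simp
  moreover have "|underS (card_of V) a| <o |V|"
    using card_of_underS[OF card_of_Card_order, of a V] assms(2) by (simp add: Field_card_of)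
  ultimately have "|{a} \<union> underS (card_of V) a| <o |V|"
    by (rule card_of_Un_ordLess_infinite[OF assms(1)])
  moreover have "under (card_of V) a \<subseteq> {a} \<union> underS (card_of V) a"
    unfolding under_def underS_def by auto
  ultimately show ?thesis by (metis card_of_mono1 ordLeq_ordLess_trans)
qed

lemma regularCard_ordLess_subset_under:
  assumes "regularCard (card_of V)" and "S \<subseteq> V" and "|S| <o |V|"
  shows "\<exists>a\<in>V. S \<subseteq> under (card_of V) a"
proof -
  have "\<not> cofinal S (card_of V)"
  proof
    assume "cofinal S (card_of V)"
    then have "|S| =o |V|"
      using assms(1,2) unfolding regularCard_def by (simp add: Field_card_of)
    then show False using not_ordLess_ordIso[OF assms(3)] by contradiction
  qed
  then obtain a where a: "a \<in> V" and not_above: "\<And>b. b \<in> S \<Longrightarrow> a = b \<or> (a, b) \<notin> card_of V"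
    unfolding cofinal_def Field_card_of by blast
  have "(b, a) \<in> card_of V" if "b \<in> S" for b
  proof -
    have "wo_rel (card_of V)" unfolding wo_rel_def by (rule card_of_Well_order)
    then have "(a, b) \<in> card_of V \<or> (b, a) \<in> card_of V"
      using wo_rel.TOTALS[of "card_of V", unfolded Field_card_of] a that assms(2) by blast
    then show ?thesis using not_above[OF that] by auto
  qed
  then show ?thesis using a unfolding under_def by blast
qed

lemma ex_card_of_minimal:
  assumes "P A"
  shows "\<exists>B. P B \<and> (\<forall>C. P C \<longrightarrow> |B| \<le>o |C| )"
proof -
  have "{|B| | B. P B} \<noteq> {}" and "\<forall>r\<in>{|B| | B. P B}. Card_order r"
    using assms card_of_Card_order by auto
  then obtain r where r: "r \<in> {|B| | B. P B}" and r_min: "\<forall>r'\<in>{|B| | B. P B}. r \<le>o r'"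
    by (rule exists_minim_Card_order[THEN bexE])
  from r obtain B where "r = |B|" and "P B" by blast
  with r_min show ?thesis by blast
qed

lemma ex_lt_exp_set_ran:
  assumes "B \<subseteq> N" and "|B| <o |M|"
  shows "\<exists>\<phi>\<in>lt_exp_set N M. ran \<phi> = B"
proof -
  obtain e where e: "inj_on e B" "e ` B \<subseteq> M"
    using ordLess_imp_ordLeq[OF assms(2)] card_of_ordLeq[of B M] by auto
  define \<phi> where "\<phi> m = (if m \<in> e ` B then Some (inv_into B e m) else None)" for m
  have "dom \<phi> = e ` B" by (auto simp: \<phi>_def dom_def)
  moreover have "ran \<phi> = B"
  proof
    show "ran \<phi> \<subseteq> B"
      by (auto simp: \<phi>_def ran_def inv_into_into split: if_splits)
    show "B \<subseteq> ran \<phi>"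
    proof
      fix b assume "b \<in> B"
      then have "\<phi> (e b) = Some b" by (simp add: \<phi>_def inv_into_f_f[OF e(1)])
      then show "b \<in> ran \<phi>" by (rule ranI)
    qed
  qed
  moreover have "|e ` B| <o |M|"
    using card_of_image assms(2) by (rule ordLeq_ordLess_trans)
  ultimately have "\<phi> \<in> lt_exp_set N M"
    using e(2) assms(1) unfolding lt_exp_set_def by auto
  with \<open>ran \<phi> = B\<close> show ?thesis by blast
qed

lemma card_of_small_subsets_ordLeq_lt_exp_set:
  assumes "|U| \<le>o |N|"
  shows "|{S. S \<subseteq> U \<and> |S| <o |M|}| \<le>o |lt_exp_set N M|"
proof -
  obtain f where f: "inj_on f U" "f ` U \<subseteq> N"
    using assms card_of_ordLeq[of U N] by auto
  have "|{S. S \<subseteq> U \<and> |S| <o |M|}| \<le>o |ran ` lt_exp_set N M|"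
  proof (rule card_of_ordLeqI[of "image f"])
    show "inj_on (image f) {S. S \<subseteq> U \<and> |S| <o |M|}"
      using inj_on_image_Pow[OF f(1)] by (rule inj_on_subset) auto
    fix S assume "S \<in> {S. S \<subseteq> U \<and> |S| <o |M|}"
    then have "f ` S \<subseteq> N" and "|f ` S| <o |M|"
      using f(2) ordLeq_ordLess_trans[OF card_of_image] by blast+
    then show "f ` S \<in> ran ` lt_exp_set N M"
      using ex_lt_exp_set_ran by (metis image_eqI)
  qed
  also have "|ran ` lt_exp_set N M| \<le>o |lt_exp_set N M|"
    by (rule card_of_image)
  finally show ?thesis .
qed

lemma mn_compact_Inter_closedin:
  assumes "mn_compact X M N" and "|K| \<le>o |N|" and "\<And>k. k \<in> K \<Longrightarrow> closedin X (C k)"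
    and "\<And>J. J \<subseteq> K \<Longrightarrow> |J| <o |M| \<Longrightarrow> topspace X \<inter> (\<Inter>k\<in>J. C k) \<noteq> {}"
  shows "topspace X \<inter> (\<Inter>k\<in>K. C k) \<noteq> {}"
proof
  assume empty: "topspace X \<inter> (\<Inter>k\<in>K. C k) = {}"
  define D where "D k = topspace X - C k" for k
  have "\<forall>V\<in>D ` K. openin X V"
    using assms(3) by (auto simp: D_def openin_diff)
  moreover have "topspace X \<subseteq> \<Union>(D ` K)"
    using empty by (auto simp: D_def)
  moreover have "|D ` K| \<le>o |N|"
    by (rule ordLeq_transitive[OF card_of_image assms(2)])
  ultimately obtain \<V> where "\<V> \<subseteq> D ` K" "topspace X \<subseteq> \<Union>\<V>" "|\<V>| <o |M|"
    using assms(1) unfolding mn_compact_def by meson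
  then obtain J where J: "J \<subseteq> K" "inj_on D J" "topspace X \<subseteq> \<Union>(D ` J)" "|D ` J| <o |M|"
    unfolding subset_image_inj by blast
  have "|J| <o |M|"
    by (rule ordLeq_ordLess_trans[OF card_of_ordLeqI[OF J(2)] J(4)]) blast
  then have "topspace X \<inter> (\<Inter>k\<in>J. C k) \<noteq> {}"
    using assms(4) J(1) by blast
  with J(3) show False by (auto simp: D_def)
qed

lemma mn_compact_common_cluster_point:
  assumes "mn_compact X M N" and "|\<A>| \<le>o |N|" and "\<A> \<subseteq> Pow I"
    and "\<And>i. i \<in> I \<Longrightarrow> q i \<in> topspace X"
    and "\<And>\<B>. \<B> \<subseteq> \<A> \<Longrightarrow> |\<B>| <o |M| \<Longrightarrow> \<exists>i\<in>I. \<forall>B\<in>\<B>. i \<in> B"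
  shows "\<exists>x\<in>topspace X. \<forall>B\<in>\<A>. x \<in> X closure_of (q ` B)"
proof -
  have "topspace X \<inter> (\<Inter>B\<in>\<A>. X closure_of (q ` B)) \<noteq> {}"
  proof (rule mn_compact_Inter_closedin[OF assms(1,2)])
    fix \<B> assume "\<B> \<subseteq> \<A>" and "|\<B>| <o |M|"
    then obtain i where "i \<in> I" "\<forall>B\<in>\<B>. i \<in> B" using assms(5) by blast
    moreover have "q ` B \<subseteq> X closure_of (q ` B)" if "B \<in> \<B>" for B
      using that \<open>\<B> \<subseteq> \<A>\<close> assms(3,4) by (intro closure_of_subset) blast
    ultimately show "topspace X \<inter> (\<Inter>B\<in>\<B>. X closure_of (q ` B)) \<noteq> {}"
      using assms(4) by blast
  qed auto
  then show ?thesis by blast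
qed

lemma mn_compact_directed_cluster_point:
  assumes X: "mn_compact X M N" and "infinite N" and "|W| \<le>o |N|"
    and q: "\<And>i. i \<in> I \<Longrightarrow> q i \<in> topspace X"
    and directed: "\<And>\<T>. \<T> \<subseteq> Fpow W \<Longrightarrow> |\<T>| <o |M| \<Longrightarrow> \<exists>i\<in>I. \<forall>T\<in>\<T>. T \<subseteq> C i"
  shows "\<exists>x\<in>topspace X. \<forall>T\<in>Fpow W. x \<in> X closure_of (q ` {i \<in> I. T \<subseteq> C i})"
proof -
  define below where "below T = {i \<in> I. T \<subseteq> C i}" for T
  have "|below ` Fpow W| \<le>o |N|"
    by (rule ordLeq_transitive[OF card_of_image card_of_Fpow_ordLeq_infinite[OF assms(3,2)]])
  moreover have "below ` Fpow W \<subseteq> Pow I"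
    unfolding below_def by blast
  moreover have "\<exists>i\<in>I. \<forall>B\<in>\<B>. i \<in> B" if "\<B> \<subseteq> below ` Fpow W" and "|\<B>| <o |M|" for \<B>
  proof -
    have "\<exists>\<T>. \<T> \<subseteq> Fpow W \<and> inj_on below \<T> \<and> \<B> = below ` \<T>"
      using that(1) by (simp only: subset_image_inj)
    then obtain \<T> where \<T>: "\<T> \<subseteq> Fpow W" "inj_on below \<T>" "\<B> = below ` \<T>"
      by (elim exE conjE)
    have "|\<T>| \<le>o |below ` \<T>|" by (rule card_of_ordLeqI[OF \<T>(2)]) blast
    then have "|\<T>| <o |M|" using that(2) unfolding \<T>(3) by (rule ordLeq_ordLess_trans)
    then obtain i where "i \<in> I" and "\<forall>T\<in>\<T>. T \<subseteq> C i"
      using directed[OF \<T>(1)] by blast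
    then show ?thesis
      unfolding \<T>(3) below_def by blast
  qed
  ultimately have "\<exists>x\<in>topspace X. \<forall>B\<in>below ` Fpow W. x \<in> X closure_of (q ` B)"
    using mn_compact_common_cluster_point[OF X, of "below ` Fpow W" I q] q by blast
  then show ?thesis by (simp add: below_def)
qed

lemma initially_compact_directed_cluster_point:
  assumes Y: "initially_compact Y L" and "|Pow I| \<le>o |L|"
    and r: "\<And>i. i \<in> I \<Longrightarrow> r i \<in> topspace Y"
    and x: "x \<in> topspace X"
    and x_cluster: "\<And>T. T \<in> Fpow W \<Longrightarrow> x \<in> X closure_of (q ` {i \<in> I. T \<subseteq> C i})"
  shows "\<exists>y\<in>topspace Y. \<forall>T\<in>Fpow W. \<forall>U. openin X U \<and> x \<in> U \<longrightarrow>
           y \<in> Y closure_of (r ` {i \<in> I. T \<subseteq> C i \<and> q i \<in> U})"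
proof -
  define A where "A T U = {i \<in> I. T \<subseteq> C i \<and> q i \<in> U}" for T U
  define \<A> where "\<A> = {A T U | T U. T \<in> Fpow W \<and> openin X U \<and> x \<in> U}"
  have "\<A> \<subseteq> Pow I" by (auto simp: \<A>_def A_def)
  moreover have "|\<A>| \<le>o |L|"
    by (rule ordLeq_transitive[OF card_of_mono1[OF calculation] assms(2)])
  moreover have "\<exists>i\<in>I. \<forall>B\<in>\<B>. i \<in> B" if "\<B> \<subseteq> \<A>" and "|\<B>| <o |UNIV :: nat set|" for \<B>
  proof -
    have "finite \<B>" using that(2) by (simp only: card_of_ordLess_nat_iff_finite)
    have "\<forall>B\<in>\<B>. \<exists>T U. B = A T U \<and> T \<in> Fpow W \<and> openin X U \<and> x \<in> U"
      using that(1) unfolding \<A>_def by blast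
    then obtain T U where TU: "\<And>B. B \<in> \<B> \<Longrightarrow> B = A (T B) (U B) \<and> T B \<in> Fpow W \<and> openin X (U B) \<and> x \<in> U B"
      by metis
    define T0 where "T0 = \<Union>(T ` \<B>)"
    define U0 where "U0 = topspace X \<inter> \<Inter>(U ` \<B>)"
    have "T0 \<in> Fpow W" using TU \<open>finite \<B>\<close> by (auto simp: T0_def Fpow_def)
    moreover have "openin X U0" unfolding U0_def using TU \<open>finite \<B>\<close>
      by (intro openin_Int_Inter) auto
    moreover have "x \<in> U0" using TU x by (auto simp: U0_def)
    ultimately obtain i where "i \<in> A T0 U0"
      using x_cluster unfolding in_closure_of A_def by blast
    have "i \<in> A (T B) (U B)" if "B \<in> \<B>" for B
      using that \<open>i \<in> A T0 U0\<close> by (auto simp: A_def T0_def U0_def)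
    moreover have "i \<in> I" using \<open>i \<in> A T0 U0\<close> by (simp add: A_def)
    ultimately show ?thesis
      using TU by metis
  qed
  ultimately have "\<exists>y\<in>topspace Y. \<forall>B\<in>\<A>. y \<in> Y closure_of (r ` B)"
    using mn_compact_common_cluster_point[OF Y[unfolded initially_compact_def], of \<A> I r] r by blast
  then show ?thesis by (auto simp: \<A>_def A_def)
qed

lemma prod_cover_directed_witness_covered:
  assumes X1: "mn_compact X1 M N" and X2: "initially_compact X2 L" and "infinite N"
    and W_open: "\<And>w. w \<in> W \<Longrightarrow> openin (prod_topology X1 X2) w"
    and W_cover: "topspace X1 \<times> topspace X2 \<subseteq> \<Union>W" and "|W| \<le>o |N|"
    and "|Pow I| \<le>o |L|"
    and p: "\<And>i. i \<in> I \<Longrightarrow> p i \<in> topspace X1 \<times> topspace X2"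
    and directed: "\<And>\<T>. \<T> \<subseteq> Fpow W \<Longrightarrow> |\<T>| <o |M| \<Longrightarrow> \<exists>i\<in>I. \<forall>T\<in>\<T>. T \<subseteq> C i"
  shows "\<exists>i\<in>I. p i \<in> \<Union>(C i)"
proof -
  have fst_p: "fst (p i) \<in> topspace X1" and snd_p: "snd (p i) \<in> topspace X2" if "i \<in> I" for i
    using p[OF that] by (auto simp: mem_Times_iff)
  have "\<exists>x\<in>topspace X1. \<forall>T\<in>Fpow W. x \<in> X1 closure_of ((\<lambda>i. fst (p i)) ` {i \<in> I. T \<subseteq> C i})"
    by (rule mn_compact_directed_cluster_point[OF X1 assms(3,6)]) (use fst_p directed in auto)
  then obtain x where x: "x \<in> topspace X1"
    and x_cluster: "\<And>T. T \<in> Fpow W \<Longrightarrow> x \<in> X1 closure_of ((\<lambda>i. fst (p i)) ` {i \<in> I. T \<subseteq> C i})"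
    by blast
  have "\<exists>y\<in>topspace X2. \<forall>T\<in>Fpow W. \<forall>U. openin X1 U \<and> x \<in> U \<longrightarrow>
      y \<in> X2 closure_of ((\<lambda>i. snd (p i)) ` {i \<in> I. T \<subseteq> C i \<and> fst (p i) \<in> U})"
    by (rule initially_compact_directed_cluster_point[OF X2 assms(7) _ x x_cluster]) (rule snd_p)
  then obtain y where y: "y \<in> topspace X2"
    and y_cluster: "\<And>T U. T \<in> Fpow W \<Longrightarrow> openin X1 U \<Longrightarrow> x \<in> U \<Longrightarrow>
      y \<in> X2 closure_of ((\<lambda>i. snd (p i)) ` {i \<in> I. T \<subseteq> C i \<and> fst (p i) \<in> U})"
    by blast
  obtain w where "w \<in> W" "(x, y) \<in> w" using W_cover x y by blast
  with W_open obtain U V where UV: "openin X1 U" "openin X2 V" "x \<in> U" "y \<in> V" "U \<times> V \<subseteq> w"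
    unfolding openin_prod_topology_alt by meson
  have "{w} \<in> Fpow W" using \<open>w \<in> W\<close> by (simp add: Fpow_def)
  then obtain i where "i \<in> I" "w \<in> C i" "fst (p i) \<in> U" "snd (p i) \<in> V"
    using y_cluster[OF _ UV(1,3)] UV(2,4) unfolding in_closure_of by blast
  then have "p i \<in> w" using UV(5) by (auto simp: mem_Times_iff)
  with \<open>i \<in> I\<close> \<open>w \<in> C i\<close> show ?thesis by blast
qed

lemma mn_compact_prod_lt_exp_set:
  assumes "infinite M" and "infinite N"
    and X1: "mn_compact X1 M N" and X2: "initially_compact X2 L"
    and "|Pow (lt_exp_set N M)| \<le>o |L|"
  shows "mn_compact (prod_topology X1 X2) M N"
  unfolding mn_compact_def
proof (intro allI impI, elim conjE)
  fix \<U>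
  assume \<U>_open: "\<forall>U\<in>\<U>. openin (prod_topology X1 X2) U"
    and \<U>_cover: "topspace (prod_topology X1 X2) \<subseteq> \<Union>\<U>" and \<U>_card: "|\<U>| \<le>o |N|"
  define I where "I = {S. S \<subseteq> \<U> \<and> |S| <o |M|}"
  show "\<exists>\<V>\<subseteq>\<U>. topspace (prod_topology X1 X2) \<subseteq> \<Union>\<V> \<and> |\<V>| <o |M|"
  proof (rule ccontr)
    assume no_small_subcover: "\<not> ?thesis"
    have "\<exists>q. q \<in> topspace X1 \<times> topspace X2 \<and> q \<notin> \<Union>S" if "S \<in> I" for S
    proof -
      have "\<not> topspace (prod_topology X1 X2) \<subseteq> \<Union>S"
        using no_small_subcover that unfolding I_def by blast
      then show ?thesis by auto
    qed
    then obtain p where p_in: "\<And>S. S \<in> I \<Longrightarrow> p S \<in> topspace X1 \<times> topspace X2"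
      and p_uncovered: "\<And>S. S \<in> I \<Longrightarrow> p S \<notin> \<Union>S"
      by metis
    have "\<exists>S\<in>I. p S \<in> \<Union>(id S)"
    proof (rule prod_cover_directed_witness_covered[OF X1 X2 assms(2), where W = \<U>])
      show "|Pow I| \<le>o |L|"
        unfolding I_def
        by (rule ordLeq_transitive[OF card_of_Pow_mono[OF card_of_small_subsets_ordLeq_lt_exp_set[OF \<U>_card]] assms(5)])
      fix \<T> assume "\<T> \<subseteq> Fpow \<U>" and "|\<T>| <o |M|"
      then have "\<Union>\<T> \<in> I"
        using card_of_Union_finite_ordLess[OF assms(1)] unfolding I_def Fpow_def by blast
      then show "\<exists>S\<in>I. \<forall>T\<in>\<T>. T \<subseteq> id S" by auto
    qed (use \<U>_open \<U>_cover \<U>_card p_in in auto)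
    then show False using p_uncovered by auto
  qed
qed

lemma regularCard_transfer_ordLeq:
  assumes regular: "\<forall>K\<subseteq>N. |M| \<le>o |K| \<longrightarrow> regularCard |K|" and "infinite V"
    and "|M| \<le>o |V|" and "|V| \<le>o |N|"
  shows "regularCard |V|"
proof -
  obtain f where f: "inj_on f V" "f ` V \<subseteq> N"
    using assms(4) card_of_ordLeq[of V N] by auto
  have iso: "|f ` V| =o |V|"
    by (rule ordIso_symmetric[OF card_of_ordIsoI[OF inj_on_imp_bij_betw[OF f(1)]]])
  have "Cinfinite |f ` V|"
    using assms(2) f(1) card_of_Card_order by (simp add: cinfinite_def Field_card_of finite_image_iff)
  moreover have "|M| \<le>o |f ` V|"
    by (rule ordLeq_ordIso_trans[OF assms(3) ordIso_symmetric[OF iso]])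
  then have "regularCard |f ` V|"
    using regular f(2) by blast
  ultimately show ?thesis
    by (rule regularCard_ordIso[OF iso])
qed

lemma regularCard_Fpow_subset_under:
  assumes "regularCard (card_of V)" and "infinite V" and "\<T> \<subseteq> Fpow V" and "|\<T>| <o |V|"
  shows "\<exists>v\<in>V. \<forall>T\<in>\<T>. T \<subseteq> under (card_of V) v"
proof -
  have "\<Union>\<T> \<subseteq> V" using assms(3) unfolding Fpow_def by blast
  moreover have "|\<Union>\<T>| <o |V|"
    by (rule card_of_Union_finite_ordLess[OF assms(2,4)]) (use assms(3) in \<open>auto simp: Fpow_def\<close>)
  ultimately obtain v where "v \<in> V" "\<Union>\<T> \<subseteq> under (card_of V) v"
    using regularCard_ordLess_subset_under[OF assms(1)] by meson
  then show ?thesis by blast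
qed

lemma min_card_cover_under_not_cover:
  assumes "infinite \<V>" and "v \<in> \<V>" and "\<V> \<subseteq> \<U>"
    and minimal: "\<And>\<V>'. \<V>' \<subseteq> \<U> \<Longrightarrow> S \<subseteq> \<Union>\<V>' \<Longrightarrow> |\<V>| \<le>o |\<V>'|"
  shows "\<not> S \<subseteq> \<Union>(under (card_of \<V>) v)"
proof
  assume "S \<subseteq> \<Union>(under (card_of \<V>) v)"
  moreover have "under (card_of \<V>) v \<subseteq> \<U>"
    using assms(3) under_Field[of "card_of \<V>" v] unfolding Field_card_of by blast
  ultimately have "|\<V>| \<le>o |under (card_of \<V>) v|" using minimal by blast
  then show False
    using card_of_under_ordLess_infinite[OF assms(1,2)] not_ordLess_ordLeq by blast
qed

lemma mn_compact_prod_regular: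
  assumes "infinite M" and "infinite N"
    and X1: "mn_compact X1 M N" and X2: "initially_compact X2 L"
    and regular: "\<forall>K\<subseteq>N. |M| \<le>o |K| \<longrightarrow> regularCard |K|" and "|Pow N| \<le>o |L|"
  shows "mn_compact (prod_topology X1 X2) M N"
  unfolding mn_compact_def
proof (intro allI impI, elim conjE)
  fix \<U>
  assume \<U>_open: "\<forall>U\<in>\<U>. openin (prod_topology X1 X2) U"
    and \<U>_cover: "topspace (prod_topology X1 X2) \<subseteq> \<Union>\<U>" and \<U>_card: "|\<U>| \<le>o |N|"
  obtain \<V> where \<V>: "\<V> \<subseteq> \<U>" "topspace (prod_topology X1 X2) \<subseteq> \<Union>\<V>"
    and \<V>_min: "\<And>\<V>'. \<V>' \<subseteq> \<U> \<Longrightarrow> topspace (prod_topology X1 X2) \<subseteq> \<Union>\<V>' \<Longrightarrow> |\<V>| \<le>o |\<V>'|"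
    using ex_card_of_minimal[of "\<lambda>\<V>. \<V> \<subseteq> \<U> \<and> topspace (prod_topology X1 X2) \<subseteq> \<Union>\<V>", OF conjI[OF subset_refl \<U>_cover]]
    by meson
  show "\<exists>\<V>\<subseteq>\<U>. topspace (prod_topology X1 X2) \<subseteq> \<Union>\<V> \<and> |\<V>| <o |M|"
  proof (rule ccontr)
    assume "\<not> ?thesis"
    then have "\<not> |\<V>| <o |M|" using \<V> by blast
    then have "|M| \<le>o |\<V>|"
      using not_ordLess_iff_ordLeq[OF card_of_Well_order card_of_Well_order] by blast
    then have "infinite \<V>" by (rule card_of_ordLeq_infinite[OF _ assms(1)])
    have "|\<V>| \<le>o |N|" by (rule ordLeq_transitive[OF card_of_mono1[OF \<V>(1)] \<U>_card])
    have "regularCard |\<V>|"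
      by (rule regularCard_transfer_ordLeq[OF regular \<open>infinite \<V>\<close> \<open>|M| \<le>o |\<V>|\<close> \<open>|\<V>| \<le>o |N|\<close>])
    have "\<not> topspace (prod_topology X1 X2) \<subseteq> \<Union>(under (card_of \<V>) v)" if "v \<in> \<V>" for v
      by (rule min_card_cover_under_not_cover[OF \<open>infinite \<V>\<close> that \<V>(1)]) (rule \<V>_min)
    then have "\<exists>q. q \<in> topspace X1 \<times> topspace X2 \<and> q \<notin> \<Union>(under (card_of \<V>) v)" if "v \<in> \<V>" for v
      using that by (metis subsetI topspace_prod_topology)
    then obtain p where p_in: "\<And>v. v \<in> \<V> \<Longrightarrow> p v \<in> topspace X1 \<times> topspace X2"
      and p_uncovered: "\<And>v. v \<in> \<V> \<Longrightarrow> p v \<notin> \<Union>(under (card_of \<V>) v)"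
      by metis
    have "\<exists>v\<in>\<V>. p v \<in> \<Union>(under (card_of \<V>) v)"
    proof (rule prod_cover_directed_witness_covered[OF X1 X2 assms(2), where W = \<V>])
      show "|Pow \<V>| \<le>o |L|"
        by (rule ordLeq_transitive[OF card_of_Pow_mono[OF \<open>|\<V>| \<le>o |N|\<close>] assms(6)])
      fix \<T> assume "\<T> \<subseteq> Fpow \<V>" and "|\<T>| <o |M|"
      then show "\<exists>v\<in>\<V>. \<forall>T\<in>\<T>. T \<subseteq> under (card_of \<V>) v"
        using regularCard_Fpow_subset_under[OF \<open>regularCard |\<V>|\<close> \<open>infinite \<V>\<close>]
          ordLess_ordLeq_trans[OF _ \<open>|M| \<le>o |\<V>|\<close>] by blast
    qed (use \<U>_open \<V> \<open>|\<V>| \<le>o |N|\<close> p_in in auto)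
    then show False using p_uncovered by blast
  qed
qed

theorem proposition3p2:
  fixes M :: "'m set" and N :: "'n set" and L :: "'l set"
    and X1 :: "'a topology" and X2 :: "'b topology"
  assumes "infinite M" and "infinite N" and "infinite L"
    and "(card_of (M)) \<le>o (card_of (N))"
    and "topspace X1 \<noteq> {}" and "topspace X2 \<noteq> {}"
    and "mn_compact X1 M N"
    and "initially_compact X2 L"
  shows "((card_of (Pow (lt_exp_set N M))) \<le>o (card_of (L)) \<longrightarrow> mn_compact (prod_topology X1 X2) M N)
       \<and> ((\<forall>K\<subseteq>N. (card_of (M)) \<le>o (card_of (K)) \<longrightarrow> regularCard (card_of (K))) \<and> (card_of (Pow N)) \<le>o (card_of (L))
            \<longrightarrow> mn_compact (prod_topology X1 X2) M N)"
proof (intro conjI impI)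
  show "mn_compact (prod_topology X1 X2) M N" if "|Pow (lt_exp_set N M)| \<le>o |L|"
    by (rule mn_compact_prod_lt_exp_set[OF assms(1,2,7,8) that])
  show "mn_compact (prod_topology X1 X2) M N"
    if "(\<forall>K\<subseteq>N. |M| \<le>o |K| \<longrightarrow> regularCard |K| ) \<and> |Pow N| \<le>o |L|"
    using that by (intro mn_compact_prod_regular[OF assms(1,2,7,8)]) simp_all
qed

end
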